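(* For every $n\ge1$ and $i=1,2$, the formal semigroup $\mathcal{S}_{K_i}$ is not closed under addition (hence not a semigroup); indeed $4\in\mathcal{S}_{K_i}$ but $4n+4\notin\mathcal{S}_{K_i}$. Here $K_1,K_2$ are the closures of $(\sigma_2\sigma_1\sigma_3\sigma_2)(\sigma_1\sigma_2\sigma_3)^{4n}\sigma_2^{-1}(\sigma_2\sigma_3)^6$ and $(\sigma_2\sigma_1\sigma_3\sigma_2)(\sigma_1\sigma_2\sigma_3)^{4n}\sigma_3^{-1}(\sigma_2\sigma_3)^6$.
   Context: For a knot $K$ whose Alexander polynomial, normalized to be a polynomial with constant term $1$, is $\Delta_K(t)$, the formal semigroup $\mathcal{S}_K\subset\mathbb{Z}_{\ge0}$ is defined by $\Delta_K(t)/(1-t)=\sum_{s\in\mathcal{S}_K}t^s$. $\sigma_i$ are the standard generators of the $4$--strand braid group. *)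

theory Defs
  imports "HOL-Computational_Algebra.Polynomial"
          "HOL-Computational_Algebra.Fraction_Field"
          "HOL-Computational_Algebra.Polynomial_FPS"
          "Jordan_Normal_Form.Determinant"
begin

text \<open>Braid words in the 4-strand braid group: the letter i (i = 1,2,3) stands for
  sigma_i and the letter -i for its inverse; words are read left to right.\<close>
type_synonym braid_word = "int list"

type_synonym ratfun = "int poly fract"

definition tvar :: ratfun where "tvar = to_fract [:0, 1:]"

definition burau_gen :: "int \<Rightarrow> ratfun mat" where
  "burau_gen x = mat 3 3 (\<lambda>(i, j).
     (if x = 1 then
        (if (i, j) = (0, 0) then - tvar else if (i, j) = (0, 1) then 1
         else if i = j then 1 else 0)
      else if x = 2 then
        (if (i, j) = (1, 0) then tvar else if (i, j) = (1, 1) then - tvar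
         else if (i, j) = (1, 2) then 1 else if i = j then 1 else 0)
      else if x = 3 then
        (if (i, j) = (2, 1) then tvar else if (i, j) = (2, 2) then - tvar
         else if i = j then 1 else 0)
      else if x = -1 then
        (if (i, j) = (0, 0) then - inverse tvar else if (i, j) = (0, 1) then inverse tvar
         else if i = j then 1 else 0)
      else if x = -2 then
        (if (i, j) = (1, 0) then 1 else if (i, j) = (1, 1) then - inverse tvar
         else if (i, j) = (1, 2) then inverse tvar else if i = j then 1 else 0)
      else if x = -3 then
        (if (i, j) = (2, 1) then 1 else if (i, j) = (2, 2) then - inverse tvar
         else if i = j then 1 else 0)
      else (if i = j then 1 else 0)))"

definition burau :: "braid_word \<Rightarrow> ratfun mat" where
  "burau w = foldl (\<lambda>M x. M * burau_gen x) (1\<^sub>m 3) w"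

text \<open>p is the Alexander polynomial of the closure of the 4-braid w, normalized to be a
  polynomial with constant term 1.  Uses the Burau formula
  det(I - burau(w)) = (1 + t + t^2 + t^3) * Delta(t), up to units +-t^k.\<close>
definition alexander_poly_closure :: "braid_word \<Rightarrow> int poly \<Rightarrow> bool" where
  "alexander_poly_closure w p \<longleftrightarrow>
     poly.coeff p 0 = 1 \<and>
     (\<exists>(e::int) (k::int). (e = 1 \<or> e = -1) \<and>
        det (1\<^sub>m 3 - burau w) =
          of_int e * tvar powi k * to_fract (p * [:1, 1, 1, 1:]))"

definition is_formal_semigroup :: "int poly \<Rightarrow> nat set \<Rightarrow> bool" where
  "is_formal_semigroup p S \<longleftrightarrow>
     fps_of_poly p = (1 - fps_X) * Abs_fps (\<lambda>s. if s \<in> S then 1 else 0)"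

definition K1_word :: "nat \<Rightarrow> braid_word" where
  "K1_word n = [2, 1, 3, 2] @ concat (replicate (4 * n) [1, 2, 3]) @ [-2]
               @ concat (replicate 6 [2, 3])"

definition K2_word :: "nat \<Rightarrow> braid_word" where
  "K2_word n = [2, 1, 3, 2] @ concat (replicate (4 * n) [1, 2, 3]) @ [-3]
               @ concat (replicate 6 [2, 3])"

end

theory Submission
  imports Defs
begin

text \<open>Each word contains the braid (\<sigma>1 \<sigma>2 \<sigma>3)^(4n), a power of the full twist, whose reduced
  Burau matrix is the scalar t^(4n). So det(I - B(K_i)) is the characteristic polynomial of the
  Burau matrix of the word with n = 0, evaluated at t^(4n), and it equals
  \<Delta>(t) (1 + t + t^2 + t^3). Hence \<Delta>(t)/(1 - t) = det(I - B(K_i))/(1 - t^4), whose coefficients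
  are partial sums of the coefficients of the determinant along the residue classes mod 4.
  In the class of 0 this gives 4, 4n \<in> S but 4n + 4 \<notin> S.\<close>

definition mat3 :: "'a \<Rightarrow> 'a \<Rightarrow> 'a \<Rightarrow> 'a \<Rightarrow> 'a \<Rightarrow> 'a \<Rightarrow> 'a \<Rightarrow> 'a \<Rightarrow> 'a \<Rightarrow> 'a mat" where
  "mat3 a b c d e f g h i = mat 3 3 (\<lambda>(r, s). [[a, b, c], [d, e, f], [g, h, i]] ! r ! s)"

lemma less_3_cases: "(r::nat) < 3 \<longleftrightarrow> r = 0 \<or> r = 1 \<or> r = 2"
  by auto

lemma mat3_carrier: "mat3 a b c d e f g h i \<in> carrier_mat 3 3"
  by (simp add: mat3_def)

lemma mat3_eqI:
  assumes "A \<in> carrier_mat 3 3"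
    and "A $$ (0, 0) = a" "A $$ (0, 1) = b" "A $$ (0, 2) = c"
    and "A $$ (1, 0) = d" "A $$ (1, 1) = e" "A $$ (1, 2) = f"
    and "A $$ (2, 0) = g" "A $$ (2, 1) = h" "A $$ (2, 2) = i"
  shows "A = mat3 a b c d e f g h i"
proof (rule eq_matI)
  fix r s
  assume "r < dim_row (mat3 a b c d e f g h i)" "s < dim_col (mat3 a b c d e f g h i)"
  then have "r < 3" "s < 3"
    by (simp_all add: mat3_def)
  then show "A $$ (r, s) = mat3 a b c d e f g h i $$ (r, s)"
    unfolding less_3_cases using assms by (elim disjE) (simp_all add: mat3_def)
qed (use assms in \<open>simp_all add: mat3_def\<close>)

lemma mat3_index:
  "mat3 a b c d e f g h i $$ (0, 0) = a" "mat3 a b c d e f g h i $$ (0, 1) = b"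
  "mat3 a b c d e f g h i $$ (0, 2) = c" "mat3 a b c d e f g h i $$ (1, 0) = d"
  "mat3 a b c d e f g h i $$ (1, 1) = e" "mat3 a b c d e f g h i $$ (1, 2) = f"
  "mat3 a b c d e f g h i $$ (2, 0) = g" "mat3 a b c d e f g h i $$ (2, 1) = h"
  "mat3 a b c d e f g h i $$ (2, 2) = i"
  by (simp_all add: mat3_def)

lemma mat3_eq_iff:
  "mat3 a b c d e f g h i = mat3 a' b' c' d' e' f' g' h' i' \<longleftrightarrow>
   a = a' \<and> b = b' \<and> c = c' \<and> d = d' \<and> e = e' \<and> f = f' \<and> g = g' \<and> h = h' \<and> i = i'"
  using mat3_eqI[OF mat3_carrier] mat3_index by metis

lemma one_mat3: "(1\<^sub>m 3 :: 'a::{zero,one} mat) = mat3 1 0 0 0 1 0 0 0 1"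
  by (rule mat3_eqI) simp_all

lemma mat3_mult:
  "mat3 a b c d e f g h i * mat3 a' b' c' d' e' f' g' h' i' =
   mat3 (a*a' + b*d' + c*g') (a*b' + b*e' + c*h') (a*c' + b*f' + c*i')
        (d*a' + e*d' + f*g') (d*b' + e*e' + f*h') (d*c' + e*f' + f*i')
        (g*a' + h*d' + i*g') (g*b' + h*e' + i*h') (g*c' + h*f' + i*i')"
  by (rule mat3_eqI)
    (auto simp: mat3_def scalar_prod_def row_def col_def numeral_3_eq_3)

lemma smult_mat3:
  "k \<cdot>\<^sub>m mat3 a b c d e f g h i = mat3 (k*a) (k*b) (k*c) (k*d) (k*e) (k*f) (k*g) (k*h) (k*i)"
  by (rule mat3_eqI) (simp_all add: mat3_def)

lemma minus_mat3:
  "mat3 a b c d e f g h i - mat3 a' b' c' d' e' f' g' h' i' =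
   mat3 (a-a') (b-b') (c-c') (d-d') (e-e') (f-f') (g-g') (h-h') (i-i')"
  by (rule mat3_eqI) (auto simp: mat3_def)

lemma det_2x2:
  assumes "A \<in> carrier_mat 2 2"
  shows "det A = A $$ (0, 0) * A $$ (1, 1) - A $$ (0, 1) * A $$ (1, 0)"
proof -
  have minor: "det (mat_delete A 0 j) = mat_delete A 0 j $$ (0, 0)" for j
    by (rule det_single) (use assms in \<open>auto simp: mat_delete_def\<close>)
  show ?thesis
    unfolding laplace_expansion_row[OF assms, of 0, simplified]
    using assms by (simp add: cofactor_def minor numeral_2_eq_2 lessThan_Suc) (simp add: mat_delete_def)
qed

lemma det_mat3:
  "det (mat3 a b c d e f g h i :: 'a::comm_ring_1 mat) =
   a*e*i - a*f*h - b*d*i + b*f*g + c*d*h - c*e*g"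
proof -
  let ?A = "mat3 a b c d e f g h i"
  have minor: "det (mat_delete ?A 0 j) =
      mat_delete ?A 0 j $$ (0, 0) * mat_delete ?A 0 j $$ (1, 1)
    - mat_delete ?A 0 j $$ (0, 1) * mat_delete ?A 0 j $$ (1, 0)" for j
    by (rule det_2x2) (simp add: mat_delete_def mat3_def)
  show ?thesis
    unfolding laplace_expansion_row[OF mat3_carrier, of 0, simplified]
    by (simp add: cofactor_def minor numeral_3_eq_3 lessThan_Suc)
      (simp add: mat_delete_def mat3_def algebra_simps)
qed

lemma det_one_minus_smult_mat3:
  "det (1\<^sub>m 3 - y \<cdot>\<^sub>m mat3 a b c d e f g h i :: 'a::comm_ring_1 mat) =
   1 - y * (a + e + i) + y^2 * (a*e - b*d + a*i - c*g + e*i - f*h)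
     - y^3 * (a*e*i - a*f*h - b*d*i + b*f*g + c*d*h - c*e*g)"
  unfolding one_mat3 smult_mat3 minus_mat3 det_mat3
  by (simp add: algebra_simps power2_eq_square power3_eq_cube)

lemma burau_gen_mat3:
  "burau_gen 1 = mat3 (- tvar) 1 0 0 1 0 0 0 1"
  "burau_gen 2 = mat3 1 0 0 tvar (- tvar) 1 0 0 1"
  "burau_gen 3 = mat3 1 0 0 0 1 0 0 tvar (- tvar)"
  "burau_gen (-2) = mat3 1 0 0 1 (- inverse tvar) (inverse tvar) 0 0 1"
  "burau_gen (-3) = mat3 1 0 0 0 1 0 0 1 (- inverse tvar)"
  by (rule mat3_eqI; simp add: burau_gen_def)+

lemma burau_gen_carrier: "burau_gen x \<in> carrier_mat 3 3"
  unfolding burau_gen_def by (rule mat_carrier)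

lemma burau_carrier: "burau w \<in> carrier_mat 3 3"
proof -
  have "foldl (\<lambda>M x. M * burau_gen x) M w \<in> carrier_mat 3 3" if "M \<in> carrier_mat 3 3" for M
    using that burau_gen_carrier by (induction w arbitrary: M) auto
  then show ?thesis
    unfolding burau_def by simp
qed

lemma burau_snoc: "burau (w @ [x]) = burau w * burau_gen x"
  by (simp add: burau_def)

lemma burau_Nil: "burau [] = 1\<^sub>m 3"
  by (simp add: burau_def)

lemma burau_append: "burau (u @ v) = burau u * burau v"
proof (induction v rule: rev_induct)
  case Nil
  then show ?case
    using burau_carrier right_mult_one_mat by (metis append_Nil2 burau_Nil)
next
  case (snoc x v)
  have "burau (u @ v @ [x]) = burau u * burau v * burau_gen x"
    using burau_snoc[of "u @ v"] snoc by simp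
  also have "\<dots> = burau u * (burau v * burau_gen x)"
    by (rule assoc_mult_mat[OF burau_carrier burau_carrier burau_gen_carrier])
  finally show ?case
    by (simp add: burau_snoc)
qed

lemma burau_full_twist: "burau (concat (replicate 4 [1, 2, 3])) = tvar^4 \<cdot>\<^sub>m 1\<^sub>m 3"
proof -
  have "concat (replicate 4 [1, 2, 3]) = [1, 2, 3, 1, 2, 3, 1, 2, 3, 1, 2, 3 :: int]"
    by (simp add: numeral_eq_Suc)
  then show ?thesis
    by (simp add: burau_def one_mat3 burau_gen_mat3 mat3_mult smult_mat3 mat3_eq_iff)
      (simp add: algebra_simps power_numeral_reduce)
qed

lemma burau_full_twist_power:
  "burau (concat (replicate (4 * n) [1, 2, 3])) = (tvar^4)^n \<cdot>\<^sub>m 1\<^sub>m 3"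
proof (induction n)
  case 0
  then show ?case
    by (simp add: burau_Nil one_mat3 smult_mat3)
next
  case (Suc n)
  have "concat (replicate (4 * Suc n) [1, 2, 3 :: int]) =
      concat (replicate 4 [1, 2, 3]) @ concat (replicate (4 * n) [1, 2, 3])"
    by (simp only: mult_Suc_right replicate_add concat_append)
  then show ?case
    by (simp add: burau_append burau_full_twist Suc one_mat3 smult_mat3 mat3_mult)
qed

lemma burau_insert_full_twists:
  "burau (u @ concat (replicate (4 * n) [1, 2, 3]) @ v) = (tvar^4)^n \<cdot>\<^sub>m burau (u @ v)"
proof -
  have u: "burau u \<in> carrier_mat 3 3" and v: "burau v \<in> carrier_mat 3 3"
    by (rule burau_carrier)+
  have "burau (u @ concat (replicate (4 * n) [1, 2, 3]) @ v) =
      burau u * ((tvar^4)^n \<cdot>\<^sub>m 1\<^sub>m 3 * burau v)"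
    by (simp add: burau_append burau_full_twist_power)
  also have "\<dots> = burau u * ((tvar^4)^n \<cdot>\<^sub>m burau v)"
    using v by (simp add: mult_smult_assoc_mat[of _ 3 3] left_mult_one_mat)
  also have "\<dots> = (tvar^4)^n \<cdot>\<^sub>m burau (u @ v)"
    using u v by (simp add: mult_smult_distrib burau_append)
  finally show ?thesis .
qed

lemma tvar_nonzero: "tvar \<noteq> 0"
  by (simp add: tvar_def)

definition indicator_fps :: "nat set \<Rightarrow> 'a::{zero,one} fps" where
  "indicator_fps S = Abs_fps (\<lambda>s. if s \<in> S then 1 else 0)"

lemma fps_one_minus_X_power_mult_nth:
  "fps_nth ((1 - fps_X ^ m) * F) s =
   fps_nth F s - (if m \<le> s then fps_nth F (s - m) else (0::'a::comm_ring_1))"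
  by (simp add: left_diff_distrib fps_X_power_mult_nth not_le)

lemma fps_of_poly_one_plus_X_to_X3:
  "fps_of_poly [:1, 1, 1, 1 :: 'a::comm_ring_1:] = 1 + fps_X + fps_X^2 + fps_X^3"
  by (simp add: fps_of_poly_pCons algebra_simps power_numeral_reduce)

lemma one_minus_X_times_one_plus_X_to_X3:
  "(1 - fps_X) * (1 + fps_X + fps_X^2 + fps_X^3) = (1 - fps_X^4 :: 'a::comm_ring_1 fps)"
  by (simp add: algebra_simps power_numeral_reduce)

lemma formal_semigroup_of_cofinite:
  fixes D :: "int poly"
  assumes D: "fps_of_poly D = (1 - fps_X^4) * indicator_fps S" and cofinite: "{L..} \<subseteq> S"
  shows "\<exists>p. p * [:1, 1, 1, 1:] = D \<and> is_formal_semigroup p S"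
proof -
  define G :: "int fps" where "G = (1 - fps_X) * indicator_fps S"
  define p where "p = truncate_fps (Suc L) G"
  have "fps_nth G s = 0" if "Suc L \<le> s" for s
  proof -
    have "s \<in> S" "s - 1 \<in> S"
      using that cofinite by auto
    then show ?thesis
      using that fps_one_minus_X_power_mult_nth[of 1 "indicator_fps S" s]
      by (simp add: G_def indicator_fps_def)
  qed
  then have p: "fps_of_poly p = G"
    unfolding p_def fps_of_poly_truncate by (intro fps_ext) (simp add: fps_cutoff_def)
  have "fps_of_poly (p * [:1, 1, 1, 1:]) = G * (1 + fps_X + fps_X^2 + fps_X^3)"
    by (simp only: fps_of_poly_mult p fps_of_poly_one_plus_X_to_X3)
  also have "\<dots> = ((1 - fps_X) * (1 + fps_X + fps_X^2 + fps_X^3)) * indicator_fps S"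
    unfolding G_def by (simp only: ac_simps)
  also have "\<dots> = fps_of_poly D"
    unfolding D one_minus_X_times_one_plus_X_to_X3 ..
  finally have "p * [:1, 1, 1, 1:] = D"
    by (simp add: fps_of_poly_eq_iff)
  moreover have "is_formal_semigroup p S"
    by (simp add: is_formal_semigroup_def p G_def indicator_fps_def)
  ultimately show ?thesis
    by blast
qed

lemma fps_of_poly_eq_one_minus_X4_mult_indicator:
  fixes D :: "'a::comm_ring_1 poly"
  assumes "\<And>q r. r < 4 \<Longrightarrow>
    coeff D (4*q + r) = of_bool (4*q + r \<in> S) - of_bool (0 < q \<and> 4*(q - 1) + r \<in> S)"
  shows "fps_of_poly D = (1 - fps_X^4) * indicator_fps S"
proof (rule fps_ext)
  fix s :: nat
  define q r where "q = s div 4" and "r = s mod 4"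
  have s: "s = 4*q + r" and r: "r < 4"
    by (simp_all add: q_def r_def)
  have "4 \<le> s \<longleftrightarrow> 0 < q" and "0 < q \<Longrightarrow> s - 4 = 4*(q - 1) + r"
    using s r by auto
  then show "fps_nth (fps_of_poly D) s = fps_nth ((1 - fps_X^4) * indicator_fps S) s"
    using assms[OF r, of q] unfolding fps_one_minus_X_power_mult_nth
    by (simp add: s indicator_fps_def)
qed

lemma alexander_poly_closureI:
  assumes "det (1\<^sub>m 3 - burau w) = to_fract (p * [:1, 1, 1, 1:])"
    and "coeff (p * [:1, 1, 1, 1:]) 0 = 1"
  shows "alexander_poly_closure w p"
  using assms unfolding alexander_poly_closure_def
  by (intro conjI exI[of _ 1] exI[of _ 0]) (simp_all add: coeff_mult_0)

lemma alexander_poly_and_formal_semigroup: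
  assumes "det (1\<^sub>m 3 - burau w) = to_fract D" and "coeff D 0 = 1"
    and "fps_of_poly D = (1 - fps_X^4) * indicator_fps S" and "{L..} \<subseteq> S"
  shows "\<exists>p. alexander_poly_closure w p \<and> is_formal_semigroup p S"
  using formal_semigroup_of_cofinite[OF assms(3,4)] assms(1,2) alexander_poly_closureI
  by metis

lemma four_mult_add_eq_iff:
  fixes a q i j :: nat
  assumes "i < 4" "j < 4"
  shows "4*a + i = 4*q + j \<longleftrightarrow> a = q \<and> i = j"
proof
  assume "4*a + i = 4*q + j"
  then have "(4*a + i) div 4 = (4*q + j) div 4" "(4*a + i) mod 4 = (4*q + j) mod 4"
    by simp_all
  then show "a = q \<and> i = j"
    using assms by simp
qed simp

lemma four_mult_add_mod:
  "(4*q) mod 4 = (0::nat)" "(4*q + 1) mod 4 = (1::nat)"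
  "(4*q + 2) mod 4 = (2::nat)" "(4*q + 3) mod 4 = (3::nat)"
  by presburger+

lemma digits_less_four: "0 < (4::nat)" "1 < (4::nat)" "2 < (4::nat)" "3 < (4::nat)"
  by simp_all

text \<open>The monomial t^(4a + i), with the exponent given by its base-4 digits, so that comparing
  exponents reduces to comparing quotients and residues.\<close>

definition monom4 :: "nat \<Rightarrow> nat \<Rightarrow> int poly" where
  "monom4 a i = monom 1 (4*a + i)"

lemma coeff_monom4:
  assumes "i < 4"
  shows "j < 4 \<Longrightarrow> coeff (monom4 a i) (4*q + j) = of_bool (a = q \<and> i = j)"
    and "coeff (monom4 a i) (4*q) = of_bool (a = q \<and> i = 0)"
  using assms four_mult_add_eq_iff[of i 0 a q] by (simp_all add: monom4_def four_mult_add_eq_iff)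

lemma to_fract_power: "to_fract (x ^ k) = to_fract x ^ k"
  by (induction k) simp_all

lemma to_fract_monom4: "to_fract (monom4 a i) = (tvar^4)^a * tvar^i"
  unfolding monom4_def monom_altdef by (simp add: to_fract_power tvar_def power_add power_mult)

lemma burau_K1_word: "burau (K1_word n) = (tvar^4)^n \<cdot>\<^sub>m burau (K1_word 0)"
  unfolding K1_word_def burau_insert_full_twists[of _ n] by simp

lemma burau_K1_word_0:
  "burau (K1_word 0) =
   mat3 (- (tvar^3) + tvar^4 - tvar^6) (tvar^6) 0
        (- (tvar^3) + tvar^5 - tvar^6) (tvar^7) (- (tvar^7))
        (tvar^2 - tvar^3 + tvar^5 - tvar^6) (tvar^7) (- (tvar^7))"
proof -
  have "K1_word 0 = [2, 1, 3, 2, -2, 2, 3, 2, 3, 2, 3, 2, 3, 2, 3, 2, 3]"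
    by (simp add: K1_word_def numeral_eq_Suc)
  then show ?thesis
    using tvar_nonzero
    by (simp add: burau_def one_mat3 burau_gen_mat3 mat3_mult mat3_eq_iff)
      (simp add: field_simps power_numeral_reduce)
qed

lemma det_one_minus_smult_burau_K1_word_0:
  "det (1\<^sub>m 3 - y \<cdot>\<^sub>m burau (K1_word 0)) =
   1 + y * (tvar^3 - tvar^4 + tvar^6) + y^2 * (tvar^9 - tvar^11 + tvar^12) + y^3 * tvar^15"
  unfolding burau_K1_word_0 det_one_minus_smult_mat3
  by (simp add: algebra_simps power_numeral_reduce)

definition K1_det :: "nat \<Rightarrow> int poly" where
  "K1_det n = monom4 0 0 + monom4 n 3 - monom4 (n + 1) 0 + monom4 (n + 1) 2
    + monom4 (2*n + 2) 1 - monom4 (2*n + 2) 3 + monom4 (2*n + 3) 0 + monom4 (3*n + 3) 3"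

lemma det_one_minus_burau_K1_word: "det (1\<^sub>m 3 - burau (K1_word n)) = to_fract (K1_det n)"
proof -
  define y where "y = (tvar^4)^n"
  have pow: "(tvar^4)^(k*n + j) = y^k * (tvar^4)^j" "(tvar^4)^(n + j) = y * (tvar^4)^j" for k j
    by (simp_all add: y_def power_add mult.commute[of k n] power_mult)
  show ?thesis
    unfolding burau_K1_word[of n] det_one_minus_smult_burau_K1_word_0 K1_det_def to_fract_add to_fract_diff
      to_fract_monom4 pow y_def[symmetric]
    by (simp add: algebra_simps power_numeral_reduce)
qed

definition K1_semigroup :: "nat \<Rightarrow> nat set" where
  "K1_semigroup n = {s.
      s mod 4 = 0 \<and> (s < 4*n + 4 \<or> 8*n + 12 \<le> s)
    \<or> s mod 4 = 1 \<and> 8*n + 9 \<le> s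
    \<or> s mod 4 = 2 \<and> 4*n + 6 \<le> s
    \<or> s mod 4 = 3 \<and> (4*n + 3 \<le> s \<and> s < 8*n + 11 \<or> 12*n + 15 \<le> s)}"

lemma K1_semigroup_residues:
  "4*q \<in> K1_semigroup n \<longleftrightarrow> q < n + 1 \<or> 2*n + 3 \<le> q"
  "4*q + 1 \<in> K1_semigroup n \<longleftrightarrow> 2*n + 2 \<le> q"
  "4*q + 2 \<in> K1_semigroup n \<longleftrightarrow> n + 1 \<le> q"
  "4*q + 3 \<in> K1_semigroup n \<longleftrightarrow> n \<le> q \<and> q < 2*n + 2 \<or> 3*n + 3 \<le> q"
  unfolding K1_semigroup_def mem_Collect_eq four_mult_add_mod
  by auto

lemma fps_of_poly_K1_det:
  "fps_of_poly (K1_det n) = (1 - fps_X^4) * indicator_fps (K1_semigroup n)"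
proof (rule fps_of_poly_eq_one_minus_X4_mult_indicator)
  fix q r :: nat
  assume "r < 4"
  then consider "r = 0" | "r = 1" | "r = 2" | "r = 3"
    by linarith
  then show "coeff (K1_det n) (4*q + r) = of_bool (4*q + r \<in> K1_semigroup n)
      - of_bool (0 < q \<and> 4*(q - 1) + r \<in> K1_semigroup n)"
    by cases (simp_all only: K1_det_def coeff_add coeff_diff coeff_monom4 digits_less_four add_0_right
        K1_semigroup_residues, auto)
qed

lemma burau_K2_word: "burau (K2_word n) = (tvar^4)^n \<cdot>\<^sub>m burau (K2_word 0)"
  unfolding K2_word_def burau_insert_full_twists[of _ n] by simp

lemma burau_K2_word_0:
  "burau (K2_word 0) =
   mat3 (- (tvar^3) + tvar^4 - tvar^6 + tvar^7) (tvar^6 - tvar^7) (- (tvar^5))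
        (- (tvar^3) + tvar^5 - tvar^6 + tvar^8) (- (tvar^8)) 0
        (tvar^2 - tvar^3 + tvar^5 - tvar^6 + tvar^8) (- (tvar^8)) 0"
proof -
  have "K2_word 0 = [2, 1, 3, 2, -3, 2, 3, 2, 3, 2, 3, 2, 3, 2, 3, 2, 3]"
    by (simp add: K2_word_def numeral_eq_Suc)
  then show ?thesis
    using tvar_nonzero
    by (simp add: burau_def one_mat3 burau_gen_mat3 mat3_mult mat3_eq_iff)
      (simp add: field_simps power_numeral_reduce)
qed

lemma det_one_minus_smult_burau_K2_word_0:
  "det (1\<^sub>m 3 - y \<cdot>\<^sub>m burau (K2_word 0)) =
   1 + y * (tvar^3 - tvar^4 + tvar^6 - tvar^7 + tvar^8)
     + y^2 * (tvar^7 - tvar^8 + tvar^9 - tvar^11 + tvar^12) + y^3 * tvar^15"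
  unfolding burau_K2_word_0 det_one_minus_smult_mat3
  by (simp add: algebra_simps power_numeral_reduce)

definition K2_det :: "nat \<Rightarrow> int poly" where
  "K2_det n = monom4 0 0 + monom4 n 3 - monom4 (n + 1) 0 + monom4 (n + 1) 2 - monom4 (n + 1) 3
    + monom4 (n + 2) 0 + monom4 (2*n + 1) 3 - monom4 (2*n + 2) 0 + monom4 (2*n + 2) 1
    - monom4 (2*n + 2) 3 + monom4 (2*n + 3) 0 + monom4 (3*n + 3) 3"

lemma det_one_minus_burau_K2_word: "det (1\<^sub>m 3 - burau (K2_word n)) = to_fract (K2_det n)"
proof -
  define y where "y = (tvar^4)^n"
  have pow: "(tvar^4)^(k*n + j) = y^k * (tvar^4)^j" "(tvar^4)^(n + j) = y * (tvar^4)^j" for k j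
    by (simp_all add: y_def power_add mult.commute[of k n] power_mult)
  show ?thesis
    unfolding burau_K2_word[of n] det_one_minus_smult_burau_K2_word_0 K2_det_def to_fract_add to_fract_diff
      to_fract_monom4 pow y_def[symmetric]
    by (simp add: algebra_simps power_numeral_reduce)
qed

definition K2_semigroup :: "nat \<Rightarrow> nat set" where
  "K2_semigroup n = {s.
      s mod 4 = 0 \<and> (s < 4*n + 4 \<or> 4*n + 8 \<le> s \<and> s < 8*n + 8 \<or> 8*n + 12 \<le> s)
    \<or> s mod 4 = 1 \<and> 8*n + 9 \<le> s
    \<or> s mod 4 = 2 \<and> 4*n + 6 \<le> s
    \<or> s mod 4 = 3 \<and> (s = 4*n + 3 \<or> s = 8*n + 7 \<or> 12*n + 15 \<le> s)}"

lemma K2_semigroup_residues: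
  "4*q \<in> K2_semigroup n \<longleftrightarrow> q < n + 1 \<or> n + 2 \<le> q \<and> q < 2*n + 2 \<or> 2*n + 3 \<le> q"
  "4*q + 1 \<in> K2_semigroup n \<longleftrightarrow> 2*n + 2 \<le> q"
  "4*q + 2 \<in> K2_semigroup n \<longleftrightarrow> n + 1 \<le> q"
  "4*q + 3 \<in> K2_semigroup n \<longleftrightarrow> q = n \<or> q = 2*n + 1 \<or> 3*n + 3 \<le> q"
  unfolding K2_semigroup_def mem_Collect_eq four_mult_add_mod
  by auto

lemma fps_of_poly_K2_det:
  "fps_of_poly (K2_det n) = (1 - fps_X^4) * indicator_fps (K2_semigroup n)"
proof (rule fps_of_poly_eq_one_minus_X4_mult_indicator)
  fix q r :: nat
  assume "r < 4"
  then consider "r = 0" | "r = 1" | "r = 2" | "r = 3"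
    by linarith
  then show "coeff (K2_det n) (4*q + r) = of_bool (4*q + r \<in> K2_semigroup n)
      - of_bool (0 < q \<and> 4*(q - 1) + r \<in> K2_semigroup n)"
    by cases (simp_all only: K2_det_def coeff_add coeff_diff coeff_monom4 digits_less_four add_0_right
        K2_semigroup_residues, auto)
qed

theorem corollary3p5:
  fixes n :: nat
  assumes "n \<ge> 1"
  shows "\<forall>w \<in> {K1_word n, K2_word n}. \<exists>p S.
           alexander_poly_closure w p \<and> is_formal_semigroup p S \<and>
           4 \<in> S \<and> 4 * n + 4 \<notin> S \<and>
           \<not> (\<forall>a \<in> S. \<forall>b \<in> S. a + b \<in> S)"
proof -
  have K1: "\<exists>p. alexander_poly_closure (K1_word n) p \<and> is_formal_semigroup p (K1_semigroup n)"
    by (rule alexander_poly_and_formal_semigroup[OF det_one_minus_burau_K1_word _ fps_of_poly_K1_det,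
          where L = "12*n + 15"]) (auto simp: K1_det_def monom4_def K1_semigroup_def)
  have K2: "\<exists>p. alexander_poly_closure (K2_word n) p \<and> is_formal_semigroup p (K2_semigroup n)"
    by (rule alexander_poly_and_formal_semigroup[OF det_one_minus_burau_K2_word _ fps_of_poly_K2_det,
          where L = "12*n + 15"]) (auto simp: K2_det_def monom4_def K2_semigroup_def)
  have "4 \<in> K1_semigroup n" "4*n \<in> K1_semigroup n" "4*n + 4 \<notin> K1_semigroup n"
    and "4 \<in> K2_semigroup n" "4*n \<in> K2_semigroup n" "4*n + 4 \<notin> K2_semigroup n"
    using assms by (simp_all add: K1_semigroup_def K2_semigroup_def)
  moreover have "\<not> (\<forall>a \<in> S. \<forall>b \<in> S. a + b \<in> S)"
    if "4 \<in> S" "4*n \<in> S" "4*n + 4 \<notin> S" for S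
    using that by (metis add.commute)
  ultimately show ?thesis
    using K1 K2 by auto
qed

end
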